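(* Let $\epsilon>0$ be the parameter of instance $\mathcal P$. Then for any $\hat\epsilon\in[0,\epsilon]$, every $\hat\epsilon$-stationary point of instance $\mathcal P$ is also an $\hat\epsilon$-stationary point of the auxiliary problem (AP): $\min_x f_0(x)$ s.t. $Hx=0$.
   Context: A point $x^*$ is an $\hat\epsilon$-stationary point of a problem $\min f_0(x)+g(x)$ s.t. $Ax+b=0$ if for some $\gamma$, $\max\{\mathrm{dist}(0,\nabla f_0(x^* )+A^\top\gamma+\partial g(x^* )),\|Ax^*+b\|\}\le\hat\epsilon$. A point $x^*$ is an $\hat\epsilon$-stationary point of (AP) if $\max\{\|Hx^*\|,\min_{\gamma'}\|\nabla f_0(x^* )+H^\top\gamma'\|\}\le\hat\epsilon$. Instance $\mathcal P$: fix $\epsilon\in(0,1)$, $L_f>0$, integers $m_1\ge2$, $m_2\ge1$ with $m_1m_2$ even, $m=3m_1m_2$, an odd integer $\bar d\ge5$, $d=m\bar d$. Write $x=(x_1^\top,\dots,x_m^\top)^\top$, $x_i\in\mathbb R^{\bar d}$; $[z]_j$ is the $j$-th coordinate. $J_p\in\mathbb R^{(p-1)\times p}$ has $-1$ at $(k,k)$, $1$ at $(k,k+1)$, zero elsewhere. $H=mL_f(J_m\otimes I_{\bar d})$. $\mathcal M=\{im_1:i=1,\dots,3m_2-1\}$, $\mathcal M^C=\{1,\dots,m-1\}\setminus\mathcal M$, $\bar A=mL_f(J_{\mathcal M}\otimes I_{\bar d})$, $A=mL_f(J_{\mathcal M^C}\otimes I_{\bar d})$ with $J_{\mathcal M},J_{\mathcal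 M^C}$ the rows of $J_m$ indexed by $\mathcal M,\mathcal M^C$; $b=0$. Choose $\beta>(50\pi+1+\|A\|)\sqrt m\,\epsilon$; $g(x)=\beta\sum_{i\in\mathcal M}\|x_i-x_{i+1}\|_1$. $\Psi(u)=0$ ($u\le0$), $1-e^{-u^2}$ ($u>0$); $\Phi(v)=4\arctan v+2\pi$. For $z\in\mathbb R^{\bar d}$: $\varphi(z,1)=-\Psi(1)\Phi([z]_1)$, $\varphi(z,j)=\Psi(-[z]_{j-1})\Phi(-[z]_j)-\Psi([z]_{j-1})\Phi([z]_j)$ ($2\le j\le\bar d$); $h_i(z)=\varphi(z,1)+3\sum_{j=1}^{\lfloor\bar d/2\rfloor}\varphi(z,2j)$ for $1\le i\le m/3$, $h_i(z)=\varphi(z,1)$ for $m/3+1\le i\le 2m/3$, $h_i(z)=\varphi(z,1)+3\sum_{j=1}^{\lfloor\bar d/2\rfloor}\varphi(z,2j+1)$ for $2m/3+1\le i\le m$. $f_i(z)=\frac{300\pi\epsilon^2}{mL_f}h_i(\frac{\sqrt mL_fz}{150\pi\epsilon})$, $f_0(x)=\sum_{i=1}^mf_i(x_i)$. Instance $\mathcal P$ is $\min_xf_0(x)+g(x)$ s.t. $Ax+b=0$. *)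

theory Defs
  imports "HOL-Analysis.Analysis"
begin

text \<open>A vector in R^d is a function from an index type to real; only its values on an
explicit finite index set matter.\<close>

definition vnorm :: "'a set \<Rightarrow> ('a \<Rightarrow> real) \<Rightarrow> real" where
  "vnorm S v = sqrt (\<Sum>s\<in>S. (v s)^2)"

definition matvec :: "'c set \<Rightarrow> ('r \<Rightarrow> 'c \<Rightarrow> real) \<Rightarrow> ('c \<Rightarrow> real) \<Rightarrow> ('r \<Rightarrow> real)" where
  "matvec C M x = (\<lambda>r. \<Sum>c\<in>C. M r c * x c)"

definition tmatvec :: "'r set \<Rightarrow> ('r \<Rightarrow> 'c \<Rightarrow> real) \<Rightarrow> ('r \<Rightarrow> real) \<Rightarrow> ('c \<Rightarrow> real)" where
  "tmatvec R M y = (\<lambda>c. \<Sum>r\<in>R. M r c * y r)"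

definition opnorm :: "'r set \<Rightarrow> 'c set \<Rightarrow> ('r \<Rightarrow> 'c \<Rightarrow> real) \<Rightarrow> real" where
  "opnorm R C M = Sup {vnorm R (matvec C M x) | x. vnorm C x \<le> 1}"

definition grad :: "(('a \<Rightarrow> real) \<Rightarrow> real) \<Rightarrow> ('a \<Rightarrow> real) \<Rightarrow> ('a \<Rightarrow> real)" where
  "grad f x = (\<lambda>k. deriv (\<lambda>t. f (x(k := t))) (x k))"

definition subdiff :: "'a set \<Rightarrow> (('a \<Rightarrow> real) \<Rightarrow> real) \<Rightarrow> ('a \<Rightarrow> real) \<Rightarrow> ('a \<Rightarrow> real) set" where
  "subdiff I g x = {v. \<forall>y. g y \<ge> g x + (\<Sum>k\<in>I. v k * (y k - x k))}"

definition dist0 :: "'a set \<Rightarrow> ('a \<Rightarrow> real) set \<Rightarrow> real" where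
  "dist0 I S = Inf (vnorm I ` S)"

text \<open>eps-stationary point of  min f0(x) + g(x)  s.t.  Ax + b = 0
  (I: coordinates of x, R: rows of A).\<close>
definition eps_stat_P ::
  "'a set \<Rightarrow> 'r set \<Rightarrow> (('a \<Rightarrow> real) \<Rightarrow> real) \<Rightarrow> (('a \<Rightarrow> real) \<Rightarrow> real)
    \<Rightarrow> ('r \<Rightarrow> 'a \<Rightarrow> real) \<Rightarrow> ('r \<Rightarrow> real) \<Rightarrow> real \<Rightarrow> ('a \<Rightarrow> real) \<Rightarrow> bool" where
  "eps_stat_P I R f0 g A b e x \<longleftrightarrow>
     (\<exists>\<gamma>. max (dist0 I {(\<lambda>k. grad f0 x k + tmatvec R A \<gamma> k + v k) | v. v \<in> subdiff I g x})
               (vnorm R (\<lambda>r. matvec I A x r + b r)) \<le> e)"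

definition eps_stat_AP ::
  "'a set \<Rightarrow> 'r set \<Rightarrow> (('a \<Rightarrow> real) \<Rightarrow> real) \<Rightarrow> ('r \<Rightarrow> 'a \<Rightarrow> real) \<Rightarrow> real \<Rightarrow> ('a \<Rightarrow> real) \<Rightarrow> bool" where
  "eps_stat_AP I R f0 H e x \<longleftrightarrow>
     max (vnorm R (matvec I H x))
         (Inf {vnorm I (\<lambda>k. grad f0 x k + tmatvec R H \<gamma>' k) | \<gamma>'. True}) \<le> e"

text \<open>Vectors x in R^d, d = m * dbar, are indexed by pairs (i, j), i in {1..m} the block,
 j in {1..dbar} the coordinate inside block x_i.\<close>

definition coords :: "nat \<Rightarrow> nat \<Rightarrow> (nat \<times> nat) set" where
  "coords m dbar = {1..m} \<times> {1..dbar}"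

text \<open>Matrix J_p (rows 1..p-1, columns 1..p).\<close>
definition Jmat :: "nat \<Rightarrow> nat \<Rightarrow> real" where
  "Jmat k i = (if i = k then -1 else if i = k + 1 then 1 else 0)"

text \<open>c * (J \<otimes> I_dbar), with rows (k, j) and columns (i, j').\<close>
definition JkronI :: "real \<Rightarrow> (nat \<times> nat) \<Rightarrow> (nat \<times> nat) \<Rightarrow> real" where
  "JkronI c r s = c * Jmat (fst r) (fst s) * (if snd r = snd s then 1 else 0)"

definition Mset :: "nat \<Rightarrow> nat \<Rightarrow> nat set" where
  "Mset m1 m2 = {i * m1 | i. 1 \<le> i \<and> i \<le> 3 * m2 - 1}"

definition MCset :: "nat \<Rightarrow> nat \<Rightarrow> nat set" where
  "MCset m1 m2 = {1..3 * m1 * m2 - 1} - Mset m1 m2"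

text \<open>H = m L_f (J_m \<otimes> I): rows {1..m-1} x {1..dbar}.\<close>
definition Hrows :: "nat \<Rightarrow> nat \<Rightarrow> nat \<Rightarrow> (nat \<times> nat) set" where
  "Hrows m1 m2 dbar = {1..3 * m1 * m2 - 1} \<times> {1..dbar}"

definition Hmat :: "nat \<Rightarrow> nat \<Rightarrow> real \<Rightarrow> (nat \<times> nat) \<Rightarrow> (nat \<times> nat) \<Rightarrow> real" where
  "Hmat m1 m2 Lf = JkronI (real (3 * m1 * m2) * Lf)"

text \<open>A = m L_f (J_{M^C} \<otimes> I): rows M^C x {1..dbar}.\<close>
definition Arows :: "nat \<Rightarrow> nat \<Rightarrow> nat \<Rightarrow> (nat \<times> nat) set" where
  "Arows m1 m2 dbar = MCset m1 m2 \<times> {1..dbar}"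

definition Amat :: "nat \<Rightarrow> nat \<Rightarrow> real \<Rightarrow> (nat \<times> nat) \<Rightarrow> (nat \<times> nat) \<Rightarrow> real" where
  "Amat m1 m2 Lf = JkronI (real (3 * m1 * m2) * Lf)"

definition gP :: "nat \<Rightarrow> nat \<Rightarrow> nat \<Rightarrow> real \<Rightarrow> (nat \<times> nat \<Rightarrow> real) \<Rightarrow> real" where
  "gP m1 m2 dbar \<beta> x = \<beta> * (\<Sum>i\<in>Mset m1 m2. \<Sum>j=1..dbar. \<bar>x (i, j) - x (i + 1, j)\<bar>)"

definition Psi :: "real \<Rightarrow> real" where
  "Psi u = (if u \<le> 0 then 0 else 1 - exp (- (u^2)))"

definition Phi :: "real \<Rightarrow> real" where
  "Phi v = 4 * arctan v + 2 * pi"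

definition varphi :: "(nat \<Rightarrow> real) \<Rightarrow> nat \<Rightarrow> real" where
  "varphi z j = (if j = 1 then - Psi 1 * Phi (z 1)
                 else Psi (- z (j - 1)) * Phi (- z j) - Psi (z (j - 1)) * Phi (z j))"

definition hfun :: "nat \<Rightarrow> nat \<Rightarrow> nat \<Rightarrow> (nat \<Rightarrow> real) \<Rightarrow> real" where
  "hfun m dbar i z =
     (if 1 \<le> i \<and> i \<le> m div 3 then varphi z 1 + 3 * (\<Sum>j=1..dbar div 2. varphi z (2 * j))
      else if m div 3 + 1 \<le> i \<and> i \<le> 2 * m div 3 then varphi z 1
      else varphi z 1 + 3 * (\<Sum>j=1..dbar div 2. varphi z (2 * j + 1)))"

definition ffun :: "real \<Rightarrow> real \<Rightarrow> nat \<Rightarrow> nat \<Rightarrow> nat \<Rightarrow> (nat \<Rightarrow> real) \<Rightarrow> real" where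
  "ffun \<epsilon> Lf m dbar i z =
     300 * pi * \<epsilon>^2 / (real m * Lf) * hfun m dbar i (\<lambda>j. sqrt (real m) * Lf * z j / (150 * pi * \<epsilon>))"

definition f0P :: "real \<Rightarrow> real \<Rightarrow> nat \<Rightarrow> nat \<Rightarrow> nat \<Rightarrow> (nat \<times> nat \<Rightarrow> real) \<Rightarrow> real" where
  "f0P \<epsilon> Lf m1 m2 dbar x = (\<Sum>i=1..3 * m1 * m2. ffun \<epsilon> Lf (3 * m1 * m2) dbar i (\<lambda>j. x (i, j)))"

end

(*
  Stationarity for P yields, for every delta > 0, a subgradient v of g with
  |grad f0 x + A^T gamma + v| < eps_h + delta.  Every partial derivative of f0 is at
  most 32 pi eps / sqrt m, and the sum of A^T gamma over the blocks 1..i of a coordinate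
  j telescopes to 0 when i is in M, because row i is then not a row of A.  If x jumped
  across such a link (i, j), shifting the blocks 1..i against the jump would lower g by
  beta times the jump, so the corresponding block sum of v has size at least beta.  This
  forces beta <= sqrt m eps_h + 32 pi sqrt m eps, contradicting the choice of beta.
  Hence x has no jumps across M, and |Hx| = |Ax|.  Finally, v is supported on the link
  pairs (i, i+1), i in M, with opposite signs, so v = H^T mu for the multiplier
  mu = -v / (m L_f) on the rows M; extending gamma by mu bounds the residual of (AP).
*)
theory Submission
  imports Defs
begin

section \<open>Partial derivatives of \<open>f0\<close>\<close>

definition Psi' :: "real \<Rightarrow> real" where
  "Psi' u = (if u \<le> 0 then 0 else 2 * u * exp (- (u^2)))"

definition Phi' :: "real \<Rightarrow> real" where
  "Phi' v = 4 / (1 + v^2)"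

lemma Psi_has_real_derivative: "(Psi has_real_derivative Psi' u) (at u)"
proof -
  consider "u < 0" | "u > 0" | "u = 0" by linarith
  then show ?thesis
  proof cases
    case 1
    have "((\<lambda>_. 0) has_real_derivative Psi' u) (at u)" using 1 by (simp add: Psi'_def)
    then show ?thesis
      by (rule has_field_derivative_transform_within_open[where S="{..<0}"])
         (use 1 in \<open>auto simp: Psi_def\<close>)
  next
    case 2
    have "((\<lambda>u. 1 - exp (- (u^2))) has_real_derivative Psi' u) (at u)"
      using 2 by (auto intro!: derivative_eq_intros simp: Psi'_def)
    then show ?thesis
      by (rule has_field_derivative_transform_within_open[where S="{0<..}"])
         (use 2 in \<open>auto simp: Psi_def\<close>)
  next
    case 3
    \<comment> \<open>\<open>0 \<le> Psi h \<le> h\<^sup>2\<close>, so the difference quotient at 0 is squeezed to 0\<close>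
    have "((\<lambda>h. Psi h / h) \<longlongrightarrow> 0) (at 0)"
    proof (rule Lim_null_comparison)
      show "\<forall>\<^sub>F h in at 0. norm (Psi h / h) \<le> \<bar>h\<bar>"
      proof (rule always_eventually, intro allI)
        fix h :: real
        show "norm (Psi h / h) \<le> \<bar>h\<bar>"
        proof (cases "h \<le> 0")
          case False
          have "1 - exp (- (h^2)) \<le> h^2" using exp_ge_add_one_self[of "- (h^2)"] by linarith
          then have "(1 - exp (- (h^2))) / h \<le> h^2 / h" using False by (simp add: divide_right_mono)
          then show ?thesis using False by (simp add: Psi_def power2_eq_square)
        qed (simp add: Psi_def)
      qed
      show "((\<lambda>h. \<bar>h\<bar>) \<longlongrightarrow> 0) (at (0::real))"
        using tendsto_rabs[OF tendsto_ident_at[of 0 UNIV]] by simp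
    qed
    then show ?thesis using 3 by (simp add: DERIV_def Psi'_def Psi_def)
  qed
qed

lemma Phi_has_real_derivative: "(Phi has_real_derivative Phi' v) (at v)"
  unfolding Phi_def Phi'_def by (auto intro!: derivative_eq_intros DERIV_arctan simp: divide_inverse)

lemma Psi_chain [derivative_intros]:
  "(f has_real_derivative f') (at x) \<Longrightarrow> ((\<lambda>x. Psi (f x)) has_real_derivative Psi' (f x) * f') (at x)"
  by (rule DERIV_chain2[OF Psi_has_real_derivative])

lemma Phi_chain [derivative_intros]:
  "(f has_real_derivative f') (at x) \<Longrightarrow> ((\<lambda>x. Phi (f x)) has_real_derivative Phi' (f x) * f') (at x)"
  by (rule DERIV_chain2[OF Phi_has_real_derivative])

lemma Psi_nonneg: "0 \<le> Psi u"
  by (simp add: Psi_def)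

lemma Psi_le_1: "Psi u \<le> 1"
  by (simp add: Psi_def)

lemma Psi_minus_add_le_1: "Psi (- u) + Psi u \<le> 1"
  by (cases "u \<le> 0") (auto simp: Psi_def)

lemma Psi'_nonneg: "0 \<le> Psi' u"
  by (simp add: Psi'_def)

lemma Psi'_le_1: "Psi' u \<le> 1"
proof (cases "u \<le> 0")
  case False
  have "2 * u \<le> 1 + u^2" using sum_squares_ge_zero[of "u - 1" 0]
    by (simp add: power2_eq_square algebra_simps)
  also have "\<dots> \<le> exp (u^2)" by (rule exp_ge_add_one_self)
  finally have "2 * u * exp (- (u^2)) \<le> exp (u^2) * exp (- (u^2))" by (simp add: mult_right_mono)
  then show ?thesis using False by (simp add: Psi'_def exp_minus)
qed (simp add: Psi'_def)

lemma Psi'_minus_add_le_1: "Psi' (- u) + Psi' u \<le> 1"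
  using Psi'_le_1[of u] Psi'_le_1[of "-u"] by (cases "u \<le> 0") (auto simp: Psi'_def)

lemma Phi_nonneg: "0 \<le> Phi v"
  using arctan_bounded[of v] by (simp add: Phi_def)

lemma Phi_le_4pi: "Phi v \<le> 4 * pi"
  using arctan_bounded[of v] by (simp add: Phi_def)

lemma Phi'_nonneg: "0 \<le> Phi' v"
  by (simp add: Phi'_def add_pos_nonneg)

lemma Phi'_le_4: "Phi' v \<le> 4"
  by (simp add: Phi'_def add_pos_nonneg divide_le_eq)

lemma convex_weights_mult_le:
  fixes p p' q q' c :: real
  assumes "0 \<le> p" "0 \<le> p'" "p + p' \<le> 1" "0 \<le> q" "q \<le> c" "0 \<le> q'" "q' \<le> c"
  shows "p * q + p' * q' \<le> c"
proof -
  have "p * q + p' * q' \<le> p * c + p' * c" using assms by (intro add_mono mult_left_mono) auto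
  also have "\<dots> \<le> c" using assms by (simp add: mult_left_le_one_le flip: distrib_right)
  finally show ?thesis .
qed

lemma varphi_fun_upd_other:
  assumes "j \<noteq> l" "l = 1 \<or> j \<noteq> l - 1"
  shows "varphi (z(j := t)) l = varphi z l"
  using assms by (auto simp: varphi_def)

lemma varphi_first_partial_deriv:
  obtains D where "((\<lambda>t. varphi (z(1 := t)) 1) has_real_derivative D) (at t)" and "\<bar>D\<bar> \<le> 4"
proof -
  have "((\<lambda>t. - Psi 1 * Phi t) has_real_derivative - (Psi 1 * Phi' t)) (at t)"
    by (auto intro!: derivative_eq_intros)
  moreover have "Psi 1 * Phi' t \<le> 4"
    using Psi_nonneg Psi_le_1 Phi'_nonneg Phi'_le_4 by (metis mult_left_le_one_le order_trans)
  ultimately show ?thesis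
    using Psi_nonneg[of 1] Phi'_nonneg[of t]
    by (intro that[of "- (Psi 1 * Phi' t)"]) (simp_all add: varphi_def)
qed

lemma varphi_own_partial_deriv:
  assumes "2 \<le> l"
  obtains D where "((\<lambda>t. varphi (z(l := t)) l) has_real_derivative D) (at t)" and "\<bar>D\<bar> \<le> 4"
proof -
  define a where "a = z (l - 1)"
  have "(\<lambda>t. varphi (z(l := t)) l) = (\<lambda>t. Psi (- a) * Phi (- t) - Psi a * Phi t)"
    using assms by (auto simp: varphi_def a_def fun_eq_iff)
  moreover have "((\<lambda>t. Psi (- a) * Phi (- t) - Psi a * Phi t) has_real_derivative
           - (Psi (- a) * Phi' (- t)) - Psi a * Phi' t) (at t)"
    by (auto intro!: derivative_eq_intros)
  moreover have "Psi (- a) * Phi' (- t) + Psi a * Phi' t \<le> 4"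
    by (intro convex_weights_mult_le Psi_nonneg Psi_minus_add_le_1 Phi'_nonneg Phi'_le_4)
  ultimately show ?thesis
    using mult_nonneg_nonneg[OF Psi_nonneg Phi'_nonneg, of a t]
      mult_nonneg_nonneg[OF Psi_nonneg Phi'_nonneg, of "- a" "- t"]
    by (intro that[of "- (Psi (- a) * Phi' (- t)) - Psi a * Phi' t"]) (auto simp: abs_le_iff)
qed

lemma varphi_prev_partial_deriv:
  assumes "2 \<le> l"
  obtains D where "((\<lambda>t. varphi (z(l - 1 := t)) l) has_real_derivative D) (at t)" and "\<bar>D\<bar> \<le> 4 * pi"
proof -
  define b where "b = z l"
  have "(\<lambda>t. varphi (z(l - 1 := t)) l) = (\<lambda>t. Psi (- t) * Phi (- b) - Psi t * Phi b)"
    using assms by (auto simp: varphi_def b_def fun_eq_iff)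
  moreover have "((\<lambda>t. Psi (- t) * Phi (- b) - Psi t * Phi b) has_real_derivative
           - (Psi' (- t) * Phi (- b)) - Psi' t * Phi b) (at t)"
    by (auto intro!: derivative_eq_intros)
  moreover have "Psi' (- t) * Phi (- b) + Psi' t * Phi b \<le> 4 * pi"
    by (intro convex_weights_mult_le Psi'_nonneg Psi'_minus_add_le_1 Phi_nonneg Phi_le_4pi)
  ultimately show ?thesis
    using mult_nonneg_nonneg[OF Psi'_nonneg Phi_nonneg, of t b]
      mult_nonneg_nonneg[OF Psi'_nonneg Phi_nonneg, of "- t" "- b"]
    by (intro that[of "- (Psi' (- t) * Phi (- b)) - Psi' t * Phi b"]) (auto simp: abs_le_iff)
qed

lemma varphi_partial_deriv:
  assumes "1 \<le> l"
  obtains D where "((\<lambda>t. varphi (z(j := t)) l) has_real_derivative D) (at t)"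
    and "\<bar>D\<bar> \<le> 4 * pi" and "j \<noteq> l \<Longrightarrow> j + 1 \<noteq> l \<Longrightarrow> D = 0"
proof -
  have four_le: "4 \<le> 4 * pi" using pi_gt3 by simp
  consider (other) "j \<noteq> l" "l = 1 \<or> j \<noteq> l - 1" | (first) "j = 1" "l = 1"
    | (own) "j = l" "2 \<le> l" | (prev) "j = l - 1" "2 \<le> l"
    using assms by linarith
  then show ?thesis
  proof cases
    case other
    then show ?thesis by (intro that[of 0]) (simp_all add: varphi_fun_upd_other pi_ge_zero)
  next
    case first
    then show ?thesis using four_le by (metis varphi_first_partial_deriv order_trans that)
  next
    case own
    then show ?thesis using four_le by (metis varphi_own_partial_deriv order_trans that)
  next
    case prev
    then show ?thesis using varphi_prev_partial_deriv[of l z t] that by fastforce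
  qed
qed

lemma varphi_sum_partial_deriv:
  fixes F :: "nat \<Rightarrow> nat"
  assumes F_pos: "\<And>l. 1 \<le> l \<Longrightarrow> 1 \<le> F l"
    and F_hits_once: "\<And>l. 1 \<le> l \<Longrightarrow> j = F l \<or> j + 1 = F l \<Longrightarrow> l = q"
  obtains D where "((\<lambda>t. \<Sum>l=1..n. varphi (z(j := t)) (F l)) has_real_derivative D) (at t)"
    and "\<bar>D\<bar> \<le> 4 * pi"
proof -
  have "\<forall>l\<in>{1..n}. \<exists>D. ((\<lambda>t. varphi (z(j := t)) (F l)) has_real_derivative D) (at t) \<and>
          \<bar>D\<bar> \<le> 4 * pi \<and> (j \<noteq> F l \<longrightarrow> j + 1 \<noteq> F l \<longrightarrow> D = 0)"
    using varphi_partial_deriv F_pos by (metis atLeastAtMost_iff)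
  then obtain Df where Df: "\<And>l. l \<in> {1..n} \<Longrightarrow> ((\<lambda>t. varphi (z(j := t)) (F l)) has_real_derivative Df l) (at t)"
    "\<And>l. l \<in> {1..n} \<Longrightarrow> \<bar>Df l\<bar> \<le> 4 * pi"
    "\<And>l. l \<in> {1..n} \<Longrightarrow> l \<noteq> q \<Longrightarrow> Df l = 0"
    using F_hits_once by (metis atLeastAtMost_iff)
  have "\<bar>\<Sum>l=1..n. Df l\<bar> \<le> (\<Sum>l=1..n. \<bar>Df l\<bar>)" by (rule sum_abs)
  also have "\<dots> = (\<Sum>l=1..n. if l = q then \<bar>Df l\<bar> else 0)" using Df(3) by (intro sum.cong) auto
  also have "\<dots> \<le> 4 * pi" using Df(2) by (simp add: sum.delta pi_ge_zero)
  finally show ?thesis by (intro that[OF DERIV_sum]) (use Df(1) in auto)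
qed

lemma hfun_partial_deriv:
  obtains D where "((\<lambda>t. hfun m dbar i (z(j := t))) has_real_derivative D) (at t)"
    and "\<bar>D\<bar> \<le> 16 * pi"
proof -
  obtain D1 where D1: "((\<lambda>t. varphi (z(j := t)) 1) has_real_derivative D1) (at t)" "\<bar>D1\<bar> \<le> 4 * pi"
    by (metis varphi_partial_deriv order_refl)
  obtain D2 where
    D2: "((\<lambda>t. \<Sum>l=1..dbar div 2. varphi (z(j := t)) (2 * l)) has_real_derivative D2) (at t)"
      "\<bar>D2\<bar> \<le> 4 * pi"
    by (rule varphi_sum_partial_deriv[where F = "\<lambda>l. 2 * l" and q = "(j + 1) div 2" and j = j]) auto
  obtain D3 where
    D3: "((\<lambda>t. \<Sum>l=1..dbar div 2. varphi (z(j := t)) (2 * l + 1)) has_real_derivative D3) (at t)"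
      "\<bar>D3\<bar> \<le> 4 * pi"
    by (rule varphi_sum_partial_deriv[where F = "\<lambda>l. 2 * l + 1" and q = "j div 2" and j = j]) auto
  have deriv_low: "((\<lambda>t. varphi (z(j := t)) 1 + 3 * (\<Sum>l=1..dbar div 2. varphi (z(j := t)) (2 * l)))
      has_real_derivative D1 + 3 * D2) (at t)"
    and deriv_high: "((\<lambda>t. varphi (z(j := t)) 1 + 3 * (\<Sum>l=1..dbar div 2. varphi (z(j := t)) (2 * l + 1)))
      has_real_derivative D1 + 3 * D3) (at t)"
    by (intro DERIV_add DERIV_cmult D1 D2 D3)+
  have bounds: "\<bar>D1 + 3 * D2\<bar> \<le> 16 * pi" "\<bar>D1\<bar> \<le> 16 * pi" "\<bar>D1 + 3 * D3\<bar> \<le> 16 * pi"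
    using D1(2) D2(2) D3(2) pi_ge_zero by linarith+
  consider (low) "1 \<le> i \<and> i \<le> m div 3"
    | (mid) "\<not> (1 \<le> i \<and> i \<le> m div 3)" "m div 3 + 1 \<le> i \<and> i \<le> 2 * m div 3"
    | (high) "\<not> (1 \<le> i \<and> i \<le> m div 3)" "\<not> (m div 3 + 1 \<le> i \<and> i \<le> 2 * m div 3)"
    by blast
  then show ?thesis
  proof cases
    case low
    show ?thesis by (rule that[of "D1 + 3 * D2"]) (use low deriv_low bounds in \<open>simp_all add: hfun_def\<close>)
  next
    case mid
    show ?thesis by (rule that[of D1]) (use mid D1 bounds in \<open>simp_all add: hfun_def\<close>)
  next
    case high
    show ?thesis
      by (rule that[of "D1 + 3 * D3"])
        (use deriv_high bounds in \<open>simp_all only: hfun_def if_not_P[OF high(1)] if_not_P[OF high(2)]\<close>)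
  qed
qed

lemma ffun_partial_deriv:
  assumes "0 < \<epsilon>" "0 < Lf" "0 < M"
  obtains D where "((\<lambda>t. ffun \<epsilon> Lf M dbar i (z(j := t))) has_real_derivative D) (at t)"
    and "\<bar>D\<bar> \<le> 32 * pi * \<epsilon> / sqrt (real M)"
proof -
  define C where "C = 300 * pi * \<epsilon>^2 / (real M * Lf)"
  define a where "a = sqrt (real M) * Lf / (150 * pi * \<epsilon>)"
  define w where "w j' = a * z j'" for j'
  have C_a: "C * a = 2 * \<epsilon> / sqrt (real M)" and "0 < C" "0 < a"
    using assms unfolding C_def a_def
    by (auto simp: field_simps power2_eq_square real_sqrt_mult[symmetric])
  have ffun_eq: "ffun \<epsilon> Lf M dbar i (z(j := s)) = C * hfun M dbar i (w(j := a * s))" for s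
  proof -
    have "(\<lambda>j'. sqrt (real M) * Lf * (z(j := s)) j' / (150 * pi * \<epsilon>)) = w(j := a * s)"
      by (auto simp: w_def a_def)
    then show ?thesis unfolding ffun_def C_def by simp
  qed
  obtain D where D: "((\<lambda>s. hfun M dbar i (w(j := s))) has_real_derivative D) (at (a * t))"
    "\<bar>D\<bar> \<le> 16 * pi"
    by (rule hfun_partial_deriv)
  have "((\<lambda>t. C * hfun M dbar i (w(j := a * t))) has_real_derivative C * (D * a)) (at t)"
    by (intro DERIV_cmult DERIV_chain2[where g = "\<lambda>t. a * t", OF D(1)])
      (auto intro!: derivative_eq_intros)
  moreover have "\<bar>C * (D * a)\<bar> \<le> 32 * pi * \<epsilon> / sqrt (real M)"
  proof -
    have "\<bar>C * (D * a)\<bar> = (C * a) * \<bar>D\<bar>"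
      using \<open>0 < C\<close> \<open>0 < a\<close> by (simp add: abs_mult ac_simps)
    also have "\<dots> = 2 * \<epsilon> / sqrt (real M) * \<bar>D\<bar>"
      by (simp only: C_a)
    also have "\<dots> \<le> 2 * \<epsilon> / sqrt (real M) * (16 * pi)"
      using D(2) assms by (intro mult_left_mono) auto
    finally show ?thesis by (simp add: ac_simps)
  qed
  ultimately show ?thesis by (intro that) (simp_all add: ffun_eq)
qed

lemma grad_f0P_bound:
  assumes "0 < \<epsilon>" "0 < Lf" "1 \<le> i" "i \<le> 3 * m1 * m2"
  shows "\<bar>grad (f0P \<epsilon> Lf m1 m2 dbar) x (i, j)\<bar> \<le> 32 * pi * \<epsilon> / sqrt (real (3 * m1 * m2))"
proof -
  define M where "M = 3 * m1 * m2"
  have M_pos: "0 < M" using assms unfolding M_def by linarith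
  define rest where "rest = (\<Sum>i'\<in>{1..M} - {i}. ffun \<epsilon> Lf M dbar i' (\<lambda>j'. x (i', j')))"
  have slice: "f0P \<epsilon> Lf m1 m2 dbar (x((i, j) := t)) =
      ffun \<epsilon> Lf M dbar i ((\<lambda>j'. x (i, j'))(j := t)) + rest" for t
  proof -
    have "f0P \<epsilon> Lf m1 m2 dbar (x((i, j) := t)) = ffun \<epsilon> Lf M dbar i ((\<lambda>j'. x (i, j'))(j := t)) +
        (\<Sum>i'\<in>{1..M} - {i}. ffun \<epsilon> Lf M dbar i' (\<lambda>j'. (x((i, j) := t)) (i', j')))"
      unfolding f0P_def M_def[symmetric] using assms
      by (subst sum.remove[of _ i]) (auto simp: M_def fun_upd_def)
    also have "(\<Sum>i'\<in>{1..M} - {i}. ffun \<epsilon> Lf M dbar i' (\<lambda>j'. (x((i, j) := t)) (i', j'))) = rest"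
      unfolding rest_def by (intro sum.cong) auto
    finally show ?thesis .
  qed
  obtain D where
    D: "((\<lambda>t. ffun \<epsilon> Lf M dbar i ((\<lambda>j'. x (i, j'))(j := t))) has_real_derivative D) (at (x (i, j)))"
      "\<bar>D\<bar> \<le> 32 * pi * \<epsilon> / sqrt (real M)"
    by (rule ffun_partial_deriv[OF assms(1,2) M_pos])
  have "((\<lambda>t. ffun \<epsilon> Lf M dbar i ((\<lambda>j'. x (i, j'))(j := t)) + rest) has_real_derivative D) (at (x (i, j)))"
    using DERIV_add[OF D(1) DERIV_const] by simp
  then have "grad (f0P \<epsilon> Lf m1 m2 dbar) x (i, j) = D"
    unfolding grad_def slice by (rule DERIV_imp_deriv)
  then show ?thesis using D(2) by (simp add: M_def)
qed

section \<open>Norms, subgradients and difference matrices\<close>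

lemma vnorm_nonneg: "0 \<le> vnorm I v"
  unfolding vnorm_def by (simp add: sum_nonneg)

lemma abs_sum_le_sqrt_card_vnorm:
  assumes "finite I" "W \<subseteq> I"
  shows "\<bar>\<Sum>k\<in>W. v k\<bar> \<le> sqrt (real (card W)) * vnorm I v"
proof -
  have "(\<Sum>k\<in>W. 1 * v k)^2 \<le> (\<Sum>k\<in>W. 1^2) * (\<Sum>k\<in>W. (v k)^2)"
    by (rule Cauchy_Schwarz_ineq_sum)
  also have "\<dots> = real (card W) * (\<Sum>k\<in>W. (v k)^2)" by simp
  also have "\<dots> \<le> real (card W) * (\<Sum>k\<in>I. (v k)^2)"
    using assms by (intro mult_left_mono sum_mono2) auto
  finally have "sqrt ((\<Sum>k\<in>W. v k)^2) \<le> sqrt (real (card W) * (\<Sum>k\<in>I. (v k)^2))"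
    by (intro real_sqrt_le_mono) simp
  then show ?thesis unfolding vnorm_def by (simp add: real_sqrt_mult)
qed

lemma opnorm_nonneg:
  assumes "finite R" "finite C"
  shows "0 \<le> opnorm R C M"
proof -
  let ?S = "{vnorm R (matvec C M x) | x. vnorm C x \<le> 1}"
  have "0 \<in> ?S"
    by (rule CollectI, rule exI[of _ "\<lambda>_. 0"]) (simp add: vnorm_def matvec_def)
  moreover have "bdd_above ?S"
  proof (rule bdd_aboveI)
    fix u assume "u \<in> ?S"
    then obtain x where u: "u = vnorm R (matvec C M x)" and x: "vnorm C x \<le> 1" by blast
    have "\<bar>x c\<bar> \<le> 1" if "c \<in> C" for c
    proof -
      have "(x c)^2 \<le> (\<Sum>c\<in>C. (x c)^2)" using assms that by (intro member_le_sum) auto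
      also have "\<dots> \<le> 1" using x unfolding vnorm_def by simp
      finally show ?thesis by (simp add: abs_square_le_1)
    qed
    then have "\<bar>matvec C M x r\<bar> \<le> (\<Sum>c\<in>C. \<bar>M r c\<bar>)" for r
      unfolding matvec_def
      by (intro order_trans[OF sum_abs] sum_mono) (simp add: abs_mult mult_left_le)
    then have "(\<Sum>r\<in>R. (matvec C M x r)^2) \<le> (\<Sum>r\<in>R. (\<Sum>c\<in>C. \<bar>M r c\<bar>)^2)"
      by (intro sum_mono) (metis abs_ge_zero power2_abs power_mono)
    then show "u \<le> sqrt (\<Sum>r\<in>R. (\<Sum>c\<in>C. \<bar>M r c\<bar>)^2)" unfolding u vnorm_def by simp
  qed
  ultimately show ?thesis unfolding opnorm_def by (meson cSup_upper)
qed

lemma dist0_approx: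
  assumes "S \<noteq> {}" "dist0 I S \<le> e" "0 < \<delta>"
  obtains s where "s \<in> S" "vnorm I s < e + \<delta>"
  using cInf_lessD[of "vnorm I ` S" "e + \<delta>"] assms unfolding dist0_def by auto

lemma subdiff_directional:
  assumes "v \<in> subdiff I g x"
  shows "g x + t * (\<Sum>k\<in>I. v k * w k) \<le> g (\<lambda>k. x k + t * w k)"
proof -
  have "g x + (\<Sum>k\<in>I. v k * ((x k + t * w k) - x k)) \<le> g (\<lambda>k. x k + t * w k)"
    using assms unfolding subdiff_def mem_Collect_eq by (rule spec)
  then show ?thesis by (simp add: sum_distrib_left mult.left_commute)
qed

lemma subdiff_inner_eq_0_if_invariant:
  assumes "v \<in> subdiff I g x" and "\<And>t. g (\<lambda>k. x k + t * w k) = g x"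
  shows "(\<Sum>k\<in>I. v k * w k) = 0"
  using subdiff_directional[OF assms(1), of 1 w] subdiff_directional[OF assms(1), of "-1" w]
    assms(2)[of 1] assms(2)[of "-1"]
  by simp

lemma subdiff_abs_inner_ge:
  assumes "v \<in> subdiff I g x" and "g (\<lambda>k. x k + (- d) * w k) = g x - \<beta> * \<bar>d\<bar>" and "d \<noteq> 0"
  shows "\<beta> \<le> \<bar>\<Sum>k\<in>I. v k * w k\<bar>"
proof -
  let ?S = "\<Sum>k\<in>I. v k * w k"
  have "\<bar>d\<bar> * \<beta> \<le> d * ?S"
    using subdiff_directional[OF assms(1), of "- d" w] assms(2) by (simp add: mult.commute)
  also have "\<dots> \<le> \<bar>d\<bar> * \<bar>?S\<bar>" by (metis abs_ge_self abs_mult)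
  finally show ?thesis using assms(3) by simp
qed

lemma sum_Jmat_row:
  assumes "finite S"
  shows "(\<Sum>i\<in>S. Jmat k i * f i) = (if k + 1 \<in> S then f (k + 1) else 0) - (if k \<in> S then f k else 0)"
proof -
  have "(\<Sum>i\<in>S. Jmat k i * f i) = (\<Sum>i\<in>S. if i = k + 1 then f i else 0) - (\<Sum>i\<in>S. if i = k then f i else 0)"
    unfolding sum_subtractf[symmetric] by (intro sum.cong) (auto simp: Jmat_def)
  then show ?thesis using assms by (simp add: sum.delta')
qed

lemma sum_Jmat_column:
  assumes "finite K" "0 \<notin> K"
  shows "(\<Sum>k\<in>K. Jmat k i * f k) = (if i - 1 \<in> K then f (i - 1) else 0) - (if i \<in> K then f i else 0)"
proof -
  have "(\<Sum>k\<in>K. Jmat k i * f k) = (\<Sum>k\<in>K. if k = i - 1 then f k else 0) - (\<Sum>k\<in>K. if k = i then f k else 0)"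
    unfolding sum_subtractf[symmetric] using assms(2) by (intro sum.cong) (auto simp: Jmat_def)
  then show ?thesis using assms(1) by (simp add: sum.delta')
qed

lemma sum_product_delta_snd:
  fixes F :: "'a \<Rightarrow> real"
  assumes "finite S" "finite T" "j \<in> T"
  shows "(\<Sum>r\<in>S \<times> T. F (fst r) * (if snd r = j then 1 else 0) * g r) = (\<Sum>i\<in>S. F i * g (i, j))"
proof -
  have "(\<Sum>r\<in>S \<times> T. F (fst r) * (if snd r = j then 1 else 0) * g r)
      = (\<Sum>i\<in>S. \<Sum>j'\<in>T. if j' = j then F i * g (i, j') else 0)"
    by (auto simp: sum.cartesian_product intro!: sum.cong)
  then show ?thesis using assms by (simp add: sum.delta')
qed

lemma matvec_JkronI:
  assumes "1 \<le> k" "k < M" "j \<in> {1..dbar}"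
  shows "matvec (coords M dbar) (JkronI c) x (k, j) = c * (x (k + 1, j) - x (k, j))"
proof -
  have "matvec (coords M dbar) (JkronI c) x (k, j) =
      (\<Sum>s\<in>{1..M} \<times> {1..dbar}. c * Jmat k (fst s) * (if snd s = j then 1 else 0) * x s)"
    unfolding matvec_def coords_def JkronI_def by (intro sum.cong refl) (auto simp: eq_commute[of j])
  also have "\<dots> = c * (\<Sum>i\<in>{1..M}. Jmat k i * x (i, j))"
    using assms by (subst sum_product_delta_snd) (auto simp: sum_distrib_left mult.assoc)
  also have "\<dots> = c * (x (k + 1, j) - x (k, j))"
    using assms by (subst sum_Jmat_row) auto
  finally show ?thesis .
qed

lemma tmatvec_JkronI:
  assumes "finite K" "0 \<notin> K" "j \<in> {1..dbar}"
  shows "tmatvec (K \<times> {1..dbar}) (JkronI c) \<gamma> (i, j) =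
     c * ((if i - 1 \<in> K then \<gamma> (i - 1, j) else 0) - (if i \<in> K then \<gamma> (i, j) else 0))"
proof -
  have "tmatvec (K \<times> {1..dbar}) (JkronI c) \<gamma> (i, j) =
      (\<Sum>r\<in>K \<times> {1..dbar}. c * Jmat (fst r) i * (if snd r = j then 1 else 0) * \<gamma> r)"
    unfolding tmatvec_def JkronI_def by (intro sum.cong refl) auto
  also have "\<dots> = c * (\<Sum>k\<in>K. Jmat k i * \<gamma> (k, j))"
    using assms by (subst sum_product_delta_snd[where F = "\<lambda>k. c * Jmat k i"])
      (auto simp: sum_distrib_left mult.assoc)
  also have "\<dots> = c * ((if i - 1 \<in> K then \<gamma> (i - 1, j) else 0) - (if i \<in> K then \<gamma> (i, j) else 0))"
    using assms by (subst sum_Jmat_column) auto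
  finally show ?thesis .
qed

lemma sum_tmatvec_JkronI_prefix:
  assumes "finite K" "0 \<notin> K" "i \<notin> K" "j \<in> {1..dbar}"
  shows "(\<Sum>i'=1..i. tmatvec (K \<times> {1..dbar}) (JkronI c) \<gamma> (i', j)) = 0"
proof -
  define u where "u n = (if n \<in> K then \<gamma> (n, j) else 0)" for n
  have step: "tmatvec (K \<times> {1..dbar}) (JkronI c) \<gamma> (i', j) = c * (u (i' - 1) - u i')" for i'
    using tmatvec_JkronI[OF assms(1,2,4)] by (simp add: u_def)
  have "(\<Sum>i'=1..i. c * (u (i' - 1) - u i')) = c * (u 0 - u i)"
    by (induction i) (simp_all add: algebra_simps)
  then show ?thesis using assms unfolding step by (simp add: u_def)
qed

section \<open>The instance \<open>P\<close>\<close>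

definition jump :: "(nat \<times> nat \<Rightarrow> real) \<Rightarrow> nat \<times> nat \<Rightarrow> real" where
  "jump x p = x p - x (fst p + 1, snd p)"

lemma jump_add_scaled:
  "jump (\<lambda>k. x k + t * w k) p = jump x p + t * jump w p"
  unfolding jump_def by (simp add: algebra_simps)

lemma finite_coords: "finite (coords M d)"
  by (simp add: coords_def)

lemma finite_Mset: "finite (Mset m1 m2)"
proof -
  have "Mset m1 m2 = (\<lambda>i. i * m1) ` {1..3 * m2 - 1}" unfolding Mset_def by auto
  then show ?thesis by simp
qed

lemma finite_Arows: "finite (Arows m1 m2 dbar)"
  by (simp add: Arows_def MCset_def)

lemma gP_eq_sum_jump:
  "gP m1 m2 dbar \<beta> x = \<beta> * (\<Sum>p\<in>Mset m1 m2 \<times> {1..dbar}. \<bar>jump x p\<bar>)"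
  unfolding gP_def jump_def by (simp add: sum.cartesian_product case_prod_beta)

lemma sgn_mult_diff_le_abs_diff: "sgn a * (b - a) \<le> \<bar>b\<bar> - \<bar>a\<bar>" for a b :: real
  by (cases "a > 0"; cases "a < 0") auto

locale instance_P =
  fixes \<epsilon> Lf \<beta> :: real and m1 m2 dbar :: nat
  assumes eps_pos: "0 < \<epsilon>" and Lf_pos: "0 < Lf" and beta_nonneg: "0 \<le> \<beta>"
    and m1_ge_2: "2 \<le> m1" and m2_pos: "1 \<le> m2"
begin

abbreviation "m \<equiv> 3 * m1 * m2"
abbreviation "Idx \<equiv> coords m dbar"
abbreviation "links \<equiv> Mset m1 m2 \<times> {1..dbar}"
abbreviation "f \<equiv> f0P \<epsilon> Lf m1 m2 dbar"
abbreviation "g \<equiv> gP m1 m2 dbar \<beta>"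

lemma Mset_bounds:
  assumes "i \<in> Mset m1 m2"
  shows "1 \<le> i" "i + 1 \<le> m"
proof -
  obtain c where c: "i = c * m1" "1 \<le> c" "c \<le> 3 * m2 - 1"
    using assms unfolding Mset_def by auto
  show "1 \<le> i" using c m1_ge_2 by simp
  have "(c + 1) * m1 \<le> 3 * m2 * m1" using c(3) m2_pos by (intro mult_le_mono1) linarith
  then show "i + 1 \<le> m" using c m1_ge_2 by (simp add: algebra_simps)
qed

lemma Mset_neighbours:
  assumes "i \<in> Mset m1 m2"
  shows "i + 1 \<notin> Mset m1 m2" "i - 1 \<notin> Mset m1 m2"
proof -
  have "m1 dvd i" using assms unfolding Mset_def by auto
  have not_dvd: "\<not> m1 dvd i'" if "i' + 1 = i \<or> i + 1 = i'" for i'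
  proof
    assume "m1 dvd i'"
    with \<open>m1 dvd i\<close> that have "m1 dvd 1" by (metis dvd_add_right_iff)
    with m1_ge_2 show False by simp
  qed
  have "m1 dvd i'" if "i' \<in> Mset m1 m2" for i' using that unfolding Mset_def by auto
  then show "i + 1 \<notin> Mset m1 m2" "i - 1 \<notin> Mset m1 m2"
    using not_dvd Mset_bounds(1)[OF assms] by (metis le_add_diff_inverse2)+
qed

lemma links_subset:
  assumes "p \<in> links"
  shows "p \<in> Idx" "(fst p + 1, snd p) \<in> Idx"
  using assms Mset_bounds[of "fst p"] unfolding coords_def by auto

lemma subdiff_g_nonempty: "\<exists>v. v \<in> subdiff Idx g x"
proof -
  define e where "e p k = (of_bool (k = p) - of_bool (k = (fst p + 1, snd p)) :: real)" for p k :: "nat \<times> nat"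
  define v where "v k = \<beta> * (\<Sum>p\<in>links. sgn (jump x p) * e p k)" for k
  have e_inner: "(\<Sum>k\<in>Idx. e p k * z k) = jump z p" if "p \<in> links" for p z
    using links_subset[OF that] unfolding e_def jump_def
    by (simp add: left_diff_distrib sum_subtractf coords_def)
  have "g x + (\<Sum>k\<in>Idx. v k * (y k - x k)) \<le> g y" for y
  proof -
    have "(\<Sum>k\<in>Idx. v k * (y k - x k)) = \<beta> * (\<Sum>p\<in>links. sgn (jump x p) * (\<Sum>k\<in>Idx. e p k * (y k - x k)))"
      unfolding v_def by (simp add: sum_distrib_left sum_distrib_right mult.assoc) (rule sum.swap)
    also have "\<dots> = \<beta> * (\<Sum>p\<in>links. sgn (jump x p) * (jump y p - jump x p))"
      by (intro arg_cong[where f = "\<lambda>s. \<beta> * s"] sum.cong refl) (simp add: e_inner jump_def)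
    also have "\<dots> \<le> \<beta> * (\<Sum>p\<in>links. \<bar>jump y p\<bar> - \<bar>jump x p\<bar>)"
      using beta_nonneg by (intro mult_left_mono sum_mono sgn_mult_diff_le_abs_diff) auto
    also have "\<dots> = g y - g x"
      unfolding gP_eq_sum_jump by (simp add: sum_subtractf right_diff_distrib)
    finally show ?thesis by simp
  qed
  then show ?thesis unfolding subdiff_def by blast
qed

lemma g_shift_invariant:
  assumes "\<And>p. p \<in> links \<Longrightarrow> jump w p = 0"
  shows "g (\<lambda>k. x k + t * w k) = g x"
  using assms unfolding gP_eq_sum_jump jump_add_scaled by simp

lemma subgrad_link_sum:
  assumes v: "v \<in> subdiff Idx g x" and i: "i \<in> Mset m1 m2" and j: "j \<in> {1..dbar}"
  shows "v (i, j) + v (i + 1, j) = 0"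
proof -
  define w :: "nat \<times> nat \<Rightarrow> real" where "w k = of_bool (k \<in> {(i, j), (i + 1, j)})" for k
  have "Idx \<inter> {k. k \<in> {(i, j), (i + 1, j)}} = {(i, j), (i + 1, j)}"
    using Mset_bounds[OF i] j unfolding coords_def by auto
  then have "v (i, j) + v (i + 1, j) = (\<Sum>k\<in>Idx. v k * w k)"
    unfolding w_def sum_mult_of_bool_eq[OF finite_coords] by simp
  also have "\<dots> = 0"
  proof (intro subdiff_inner_eq_0_if_invariant[OF v] g_shift_invariant)
    fix p assume "p \<in> links"
    then show "jump w p = 0"
      using Mset_neighbours[OF i] Mset_neighbours[of "fst p"] unfolding w_def jump_def
      by (cases p) auto
  qed
  finally show ?thesis .
qed

lemma subgrad_off_links:
  assumes v: "v \<in> subdiff Idx g x" and k: "(i, j) \<in> Idx"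
    and "i \<notin> Mset m1 m2" "i - 1 \<notin> Mset m1 m2"
  shows "v (i, j) = 0"
proof -
  define w :: "nat \<times> nat \<Rightarrow> real" where "w k = of_bool (k = (i, j))" for k
  have "Idx \<inter> {k. k = (i, j)} = {(i, j)}" using k by auto
  then have "v (i, j) = (\<Sum>k\<in>Idx. v k * w k)"
    unfolding w_def sum_mult_of_bool_eq[OF finite_coords] by simp
  also have "\<dots> = 0"
  proof (intro subdiff_inner_eq_0_if_invariant[OF v] g_shift_invariant)
    fix p assume "p \<in> links"
    then show "jump w p = 0"
      using assms(3,4) unfolding w_def jump_def by (cases p) auto
  qed
  finally show ?thesis .
qed

lemma subgrad_prefix_sum_ge:
  assumes v: "v \<in> subdiff Idx g x" and i: "i \<in> Mset m1 m2" and j: "j \<in> {1..dbar}"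
    and jump_ne: "x (i, j) \<noteq> x (i + 1, j)"
  shows "\<beta> \<le> \<bar>\<Sum>i'=1..i. v (i', j)\<bar>"
proof -
  define W where "W = {1..i} \<times> {j}"
  define w :: "nat \<times> nat \<Rightarrow> real" where "w k = of_bool (k \<in> W)" for k
  define d where "d = jump x (i, j)"
  have jump_w: "jump w p = of_bool (p = (i, j))" if "p \<in> links" for p
    using that Mset_bounds[of "fst p"] unfolding w_def W_def jump_def by (cases p) auto
  have "g (\<lambda>k. x k + (- d) * w k) = \<beta> * (\<Sum>p\<in>links. \<bar>jump x p\<bar> - of_bool (p = (i, j)) * \<bar>d\<bar>)"
    unfolding gP_eq_sum_jump jump_add_scaled
    by (intro arg_cong[where f = "\<lambda>s. \<beta> * s"] sum.cong refl) (auto simp: jump_w d_def)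
  also have "\<dots> = g x - \<beta> * \<bar>d\<bar>"
    using i j finite_Mset unfolding gP_eq_sum_jump by (simp add: sum_subtractf right_diff_distrib)
  finally have "\<beta> \<le> \<bar>\<Sum>k\<in>Idx. v k * w k\<bar>"
    by (rule subdiff_abs_inner_ge[OF v]) (use jump_ne in \<open>simp add: d_def jump_def\<close>)
  moreover have "Idx \<inter> {k. k \<in> W} = W"
    using Mset_bounds[OF i] j unfolding W_def coords_def by auto
  ultimately show ?thesis
    unfolding w_def sum_mult_of_bool_eq[OF finite_coords] by (simp add: W_def sum.cartesian_product')
qed

lemma tmatvec_Amat_prefix_sum:
  assumes "i \<in> Mset m1 m2" "j \<in> {1..dbar}"
  shows "(\<Sum>i'=1..i. tmatvec (Arows m1 m2 dbar) (Amat m1 m2 Lf) \<gamma> (i', j)) = 0"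
  unfolding Arows_def Amat_def
  by (rule sum_tmatvec_JkronI_prefix) (use assms in \<open>auto simp: MCset_def\<close>)

lemma grad_f_bound:
  assumes "k \<in> Idx"
  shows "\<bar>grad f x k\<bar> \<le> 32 * pi * \<epsilon> / sqrt m"
  using assms grad_f0P_bound[OF eps_pos Lf_pos] unfolding coords_def by (cases k) auto

lemma beta_le_if_jump:
  assumes v: "v \<in> subdiff Idx g x"
    and r: "vnorm Idx (\<lambda>k. grad f x k + tmatvec (Arows m1 m2 dbar) (Amat m1 m2 Lf) \<gamma> k + v k) \<le> r"
    and i: "i \<in> Mset m1 m2" and j: "j \<in> {1..dbar}" and jump_ne: "x (i, j) \<noteq> x (i + 1, j)"
  shows "\<beta> \<le> sqrt m * r + 32 * pi * sqrt m * \<epsilon>"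
proof -
  let ?D = "\<lambda>k. grad f x k + tmatvec (Arows m1 m2 dbar) (Amat m1 m2 Lf) \<gamma> k + v k"
  let ?W = "{1..i} \<times> {j}"
  have W_sub: "?W \<subseteq> Idx" and card_W: "card ?W \<le> m"
    using Mset_bounds[OF i] j by (auto simp: coords_def)
  then have card_W_real: "real (card ?W) \<le> real m" by (simp only: of_nat_le_iff)
  have "(\<Sum>i'=1..i. v (i', j)) = (\<Sum>k\<in>?W. ?D k) - (\<Sum>k\<in>?W. grad f x k)"
    using tmatvec_Amat_prefix_sum[OF i j] by (simp add: sum.cartesian_product' sum.distrib)
  moreover have "\<bar>\<Sum>k\<in>?W. ?D k\<bar> \<le> sqrt m * r"
  proof -
    have "\<bar>\<Sum>k\<in>?W. ?D k\<bar> \<le> sqrt (card ?W) * vnorm Idx ?D"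
      by (rule abs_sum_le_sqrt_card_vnorm[OF finite_coords W_sub])
    also have "\<dots> \<le> sqrt m * r"
      using card_W_real r by (intro mult_mono) (auto simp: vnorm_nonneg simp del: of_nat_mult)
    finally show ?thesis .
  qed
  moreover have "\<bar>\<Sum>k\<in>?W. grad f x k\<bar> \<le> 32 * pi * sqrt m * \<epsilon>"
  proof -
    have "\<bar>\<Sum>k\<in>?W. grad f x k\<bar> \<le> card ?W * (32 * pi * \<epsilon> / sqrt m)"
      using W_sub grad_f_bound by (intro order_trans[OF sum_abs] sum_bounded_above) auto
    also have "\<dots> \<le> m * (32 * pi * \<epsilon> / sqrt m)"
      using card_W_real eps_pos by (intro mult_right_mono) auto
    also have "\<dots> = 32 * pi * sqrt m * \<epsilon>"
      using m1_ge_2 m2_pos by (simp add: real_div_sqrt field_simps)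
    finally show ?thesis .
  qed
  ultimately show ?thesis using subgrad_prefix_sum_ge[OF v i j jump_ne] by linarith
qed

lemma Hrows_eq_Arows_Un_links:
  "Hrows m1 m2 dbar = Arows m1 m2 dbar \<union> links" "Arows m1 m2 dbar \<inter> links = {}"
  using Mset_bounds unfolding Hrows_def Arows_def MCset_def by fastforce+

lemma vnorm_Hmat_eq_vnorm_Amat:
  assumes no_jump: "\<And>p. p \<in> links \<Longrightarrow> jump x p = 0"
  shows "vnorm (Hrows m1 m2 dbar) (matvec Idx (Hmat m1 m2 Lf) x) =
         vnorm (Arows m1 m2 dbar) (matvec Idx (Amat m1 m2 Lf) x)"
proof -
  have links_zero: "matvec Idx (Hmat m1 m2 Lf) x p = 0" if p_link: "p \<in> links" for p
  proof -
    obtain i j where p: "p = (i, j)" "i \<in> Mset m1 m2" "j \<in> {1..dbar}" using p_link by auto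
    have "matvec Idx (Hmat m1 m2 Lf) x p = - (real m * Lf) * jump x p"
      using Mset_bounds[OF p(2)] unfolding Hmat_def jump_def p(1)
      by (subst matvec_JkronI) (use p(3) in \<open>auto simp: algebra_simps\<close>)
    then show ?thesis using no_jump p_link by simp
  qed
  have "finite links" using finite_Mset by simp
  have "(\<Sum>r\<in>Hrows m1 m2 dbar. (matvec Idx (Hmat m1 m2 Lf) x r)\<^sup>2) =
      (\<Sum>r\<in>Arows m1 m2 dbar. (matvec Idx (Hmat m1 m2 Lf) x r)\<^sup>2) +
      (\<Sum>r\<in>links. (matvec Idx (Hmat m1 m2 Lf) x r)\<^sup>2)"
    unfolding Hrows_eq_Arows_Un_links(1)
    by (rule sum.union_disjoint[OF finite_Arows \<open>finite links\<close> Hrows_eq_Arows_Un_links(2)])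
  also have "(\<Sum>r\<in>links. (matvec Idx (Hmat m1 m2 Lf) x r)\<^sup>2) = 0"
    using links_zero by simp
  finally show ?thesis unfolding vnorm_def by (simp add: Hmat_def Amat_def)
qed

lemma tmatvec_links_subgrad:
  assumes v: "v \<in> subdiff Idx g x" and k: "(i, j) \<in> Idx" and "c \<noteq> 0"
  shows "tmatvec links (JkronI c) (\<lambda>r. - v r / c) (i, j) = v (i, j)"
proof -
  have j: "j \<in> {1..dbar}" using k by (simp add: coords_def)
  have "tmatvec links (JkronI c) (\<lambda>r. - v r / c) (i, j) =
      c * ((if i - 1 \<in> Mset m1 m2 then - v (i - 1, j) / c else 0) - (if i \<in> Mset m1 m2 then - v (i, j) / c else 0))"
    using Mset_bounds(1) j by (intro tmatvec_JkronI finite_Mset) force+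
  also have "\<dots> = v (i, j)"
  proof (cases "i \<in> Mset m1 m2")
    case True
    then show ?thesis using Mset_neighbours(2) \<open>c \<noteq> 0\<close> by simp
  next
    case False
    show ?thesis
    proof (cases "i - 1 \<in> Mset m1 m2")
      case True
      then have "i = i - 1 + 1" using Mset_bounds(1) False by fastforce
      then have "v (i, j) = - v (i - 1, j)" using subgrad_link_sum[OF v True j] by simp
      then show ?thesis using True False \<open>c \<noteq> 0\<close> by simp
    next
      case prev: False
      then show ?thesis using subgrad_off_links[OF v k False prev] False by simp
    qed
  qed
  finally show ?thesis .
qed

lemma tmatvec_Hmat_absorbs_subgrad:
  assumes v: "v \<in> subdiff Idx g x"
  obtains \<gamma>' where "\<And>k. k \<in> Idx \<Longrightarrow>
    tmatvec (Hrows m1 m2 dbar) (Hmat m1 m2 Lf) \<gamma>' k = tmatvec (Arows m1 m2 dbar) (Amat m1 m2 Lf) \<gamma> k + v k"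
proof -
  define c where "c = real m * Lf"
  have "c \<noteq> 0" using Lf_pos m1_ge_2 m2_pos by (simp add: c_def)
  define \<gamma>' where "\<gamma>' r = (if r \<in> Arows m1 m2 dbar then \<gamma> r else - v r / c)" for r
  have split: "tmatvec (Hrows m1 m2 dbar) (Hmat m1 m2 Lf) \<gamma>' k =
      tmatvec (Arows m1 m2 dbar) (Hmat m1 m2 Lf) \<gamma>' k + tmatvec links (Hmat m1 m2 Lf) \<gamma>' k" for k
    unfolding tmatvec_def Hrows_eq_Arows_Un_links(1)
    by (rule sum.union_disjoint[OF finite_Arows _ Hrows_eq_Arows_Un_links(2)]) (simp add: finite_Mset)
  have A_part: "tmatvec (Arows m1 m2 dbar) (Hmat m1 m2 Lf) \<gamma>' k = tmatvec (Arows m1 m2 dbar) (Amat m1 m2 Lf) \<gamma> k"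
    for k unfolding tmatvec_def \<gamma>'_def Hmat_def Amat_def by (intro sum.cong) auto
  have links_part: "tmatvec links (Hmat m1 m2 Lf) \<gamma>' k = tmatvec links (JkronI c) (\<lambda>r. - v r / c) k" for k
    using Hrows_eq_Arows_Un_links(2) unfolding tmatvec_def \<gamma>'_def Hmat_def c_def
    by (intro sum.cong) auto
  show ?thesis
  proof (rule that)
    fix k assume "k \<in> Idx"
    moreover obtain i j where "k = (i, j)" by fastforce
    ultimately show "tmatvec (Hrows m1 m2 dbar) (Hmat m1 m2 Lf) \<gamma>' k =
        tmatvec (Arows m1 m2 dbar) (Amat m1 m2 Lf) \<gamma> k + v k"
      using split A_part links_part tmatvec_links_subgrad[OF v _ \<open>c \<noteq> 0\<close>] by simp
  qed
qed

definition approx_stationary :: "real \<Rightarrow> (nat \<times> nat \<Rightarrow> real) \<Rightarrow> (nat \<times> nat \<Rightarrow> real) \<Rightarrow> bool" where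
  "approx_stationary r \<gamma> x \<longleftrightarrow> (\<forall>\<delta>>0. \<exists>v\<in>subdiff Idx g x.
     vnorm Idx (\<lambda>k. grad f x k + tmatvec (Arows m1 m2 dbar) (Amat m1 m2 Lf) \<gamma> k + v k) < r + \<delta>)"

lemma approx_stationary_if_dist0_le:
  assumes "dist0 Idx {(\<lambda>k. grad f x k + tmatvec (Arows m1 m2 dbar) (Amat m1 m2 Lf) \<gamma> k + v k) | v.
                      v \<in> subdiff Idx g x} \<le> r"
  shows "approx_stationary r \<gamma> x"
  using subdiff_g_nonempty[of x] dist0_approx[OF _ assms] unfolding approx_stationary_def by blast

lemma no_jump_if_approx_stationary:
  assumes beta_large: "(50 * pi + 1) * sqrt m * \<epsilon> < \<beta>" and "r \<le> \<epsilon>"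
    and approx: "approx_stationary r \<gamma> x" and p: "p \<in> links"
  shows "jump x p = 0"
proof (rule ccontr)
  assume "jump x p \<noteq> 0"
  then obtain i j where i: "i \<in> Mset m1 m2" and j: "j \<in> {1..dbar}" and ne: "x (i, j) \<noteq> x (i + 1, j)"
    using p by (cases p) (auto simp: jump_def)
  have sqrt_m_pos: "0 < sqrt m" using m1_ge_2 m2_pos by simp
  have "\<beta> - 32 * pi * sqrt m * \<epsilon> \<le> sqrt m * r"
  proof (rule field_le_epsilon)
    fix e :: real assume "0 < e"
    then obtain v where "v \<in> subdiff Idx g x"
      "vnorm Idx (\<lambda>k. grad f x k + tmatvec (Arows m1 m2 dbar) (Amat m1 m2 Lf) \<gamma> k + v k) \<le> r + e / sqrt m"
      using approx sqrt_m_pos unfolding approx_stationary_def by (meson divide_pos_pos less_imp_le)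
    then have "\<beta> \<le> sqrt m * (r + e / sqrt m) + 32 * pi * sqrt m * \<epsilon>"
      using beta_le_if_jump i j ne by blast
    moreover have "sqrt m * (r + e / sqrt m) = sqrt m * r + e"
      using sqrt_m_pos by (simp add: distrib_left del: of_nat_mult)
    ultimately show "\<beta> - 32 * pi * sqrt m * \<epsilon> \<le> sqrt m * r + e" by linarith
  qed
  moreover have "sqrt m * r \<le> sqrt m * \<epsilon>" using \<open>r \<le> \<epsilon>\<close> sqrt_m_pos by simp
  moreover have "0 < pi * sqrt m * \<epsilon>" using sqrt_m_pos eps_pos by simp
  ultimately show False using beta_large by (simp add: algebra_simps)
qed

lemma AP_residual_le_if_approx_stationary:
  assumes approx: "approx_stationary r \<gamma> x"
  shows "Inf {vnorm Idx (\<lambda>k. grad f x k + tmatvec (Hrows m1 m2 dbar) (Hmat m1 m2 Lf) \<gamma>' k) | \<gamma>'. True} \<le> r"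
    (is "Inf ?T \<le> _")
proof (rule field_le_epsilon)
  fix \<delta> :: real assume "0 < \<delta>"
  then obtain v where v: "v \<in> subdiff Idx g x"
    and v_close: "vnorm Idx (\<lambda>k. grad f x k + tmatvec (Arows m1 m2 dbar) (Amat m1 m2 Lf) \<gamma> k + v k) < r + \<delta>"
    using approx unfolding approx_stationary_def by blast
  obtain \<gamma>' where "\<And>k. k \<in> Idx \<Longrightarrow>
      tmatvec (Hrows m1 m2 dbar) (Hmat m1 m2 Lf) \<gamma>' k = tmatvec (Arows m1 m2 dbar) (Amat m1 m2 Lf) \<gamma> k + v k"
    using tmatvec_Hmat_absorbs_subgrad[OF v] by blast
  then have "vnorm Idx (\<lambda>k. grad f x k + tmatvec (Hrows m1 m2 dbar) (Hmat m1 m2 Lf) \<gamma>' k) =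
      vnorm Idx (\<lambda>k. grad f x k + tmatvec (Arows m1 m2 dbar) (Amat m1 m2 Lf) \<gamma> k + v k)"
    unfolding vnorm_def by (simp add: add.assoc)
  moreover have "bdd_below ?T" by (rule bdd_belowI[of _ 0]) (auto simp: vnorm_nonneg)
  ultimately have "Inf ?T < r + \<delta>"
    using v_close by (metis (mono_tags, lifting) cInf_lower mem_Collect_eq order_le_less_trans)
  then show "Inf ?T \<le> r + \<delta>" by simp
qed

theorem eps_stat_AP_if_eps_stat_P:
  assumes "(50 * pi + 1) * sqrt m * \<epsilon> < \<beta>" and "\<epsilon>h \<le> \<epsilon>"
    and "eps_stat_P Idx (Arows m1 m2 dbar) f g (Amat m1 m2 Lf) (\<lambda>_. 0) \<epsilon>h x"
  shows "eps_stat_AP Idx (Hrows m1 m2 dbar) f (Hmat m1 m2 Lf) \<epsilon>h x"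
proof -
  obtain \<gamma> where approx: "approx_stationary \<epsilon>h \<gamma> x"
    and Ax: "vnorm (Arows m1 m2 dbar) (matvec Idx (Amat m1 m2 Lf) x) \<le> \<epsilon>h"
    using assms(3) approx_stationary_if_dist0_le unfolding eps_stat_P_def by fastforce
  have "jump x p = 0" if "p \<in> links" for p
    using no_jump_if_approx_stationary[OF assms(1,2) approx that] .
  then have "vnorm (Hrows m1 m2 dbar) (matvec Idx (Hmat m1 m2 Lf) x) \<le> \<epsilon>h"
    using Ax vnorm_Hmat_eq_vnorm_Amat by simp
  then show ?thesis
    using AP_residual_le_if_approx_stationary[OF approx] unfolding eps_stat_AP_def by simp
qed

end

theorem lemma4:
  fixes \<epsilon> Lf \<beta> \<epsilon>h :: real and m1 m2 dbar :: nat and x :: "nat \<times> nat \<Rightarrow> real"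
  assumes eps: "0 < \<epsilon>" "\<epsilon> < 1"
    and Lf: "0 < Lf"
    and m1: "2 \<le> m1" and m2: "1 \<le> m2" and ev: "even (m1 * m2)"
    and dbar: "odd dbar" "5 \<le> dbar"
    and beta: "\<beta> > (50 * pi + 1 + opnorm (Arows m1 m2 dbar) (coords (3 * m1 * m2) dbar) (Amat m1 m2 Lf))
                     * sqrt (real (3 * m1 * m2)) * \<epsilon>"
    and eh: "0 \<le> \<epsilon>h" "\<epsilon>h \<le> \<epsilon>"
    and stat: "eps_stat_P (coords (3 * m1 * m2) dbar) (Arows m1 m2 dbar) (f0P \<epsilon> Lf m1 m2 dbar)
                 (gP m1 m2 dbar \<beta>) (Amat m1 m2 Lf) (\<lambda>_. 0) \<epsilon>h x"
  shows "eps_stat_AP (coords (3 * m1 * m2) dbar) (Hrows m1 m2 dbar) (f0P \<epsilon> Lf m1 m2 dbar)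
           (Hmat m1 m2 Lf) \<epsilon>h x"
proof -
  have "0 \<le> opnorm (Arows m1 m2 dbar) (coords (3 * m1 * m2) dbar) (Amat m1 m2 Lf)"
    by (rule opnorm_nonneg[OF finite_Arows finite_coords])
  then have beta_large: "(50 * pi + 1) * sqrt (3 * m1 * m2) * \<epsilon> < \<beta>"
    using beta eps by (smt (verit) mult_right_mono real_sqrt_ge_zero of_nat_0_le_iff)
  moreover have "0 \<le> (50 * pi + 1) * sqrt (3 * m1 * m2) * \<epsilon>"
    using eps by simp
  ultimately interpret instance_P \<epsilon> Lf \<beta> m1 m2 dbar
    using eps Lf m1 m2 by unfold_locales linarith+
  show ?thesis using eps_stat_AP_if_eps_stat_P[OF beta_large eh(2) stat] .
qed

end
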